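(* Let $0<a\le 1$, $b=2-a$, $\tfrac12<c_1<1$, and let $(k_a(t),k_b(t))$ be the Markov chain $K$ described in the context, started from any state with $k_a+k_b\ge 2c_1 n$. Let $\tau$ be the hitting time of $(n,n)$. Then there is a constant $C$ depending only on $a,c_1$ such that, uniformly over such starting states, $$\mathbb{E}\,\tau\le \frac{n}{a(2c_1-1)}\big[\log 2n+\log\log 2n+C\big].$$
   Context: The chain $K$ (it records the numbers $k_a,k_b$ of marked $a$-cards and marked $b$-cards in the second marking phase of a biased transposition shuffle of $N=2n$ cards, $n$ of each type). Its states are pairs $(k_a,k_b)$ of integers with $0\le k_a,k_b\le n$ and $k_a+k_b\ge n$. From $(k_a,k_b)$ it moves to $(k_a,k_b+1)$ with probability $\frac{2ab(n-k_b)(k_a+k_b+1)}{(2n)^2}$; to $(k_a+1,k_b)$ with probability $\frac{2a^2(n-k_a)(k_a+k_b+1)}{(2n)^2}$; to $(k_a+1,k_b-1)$ with probability $\frac{2a(b-a)(n-k_a)k_b}{(2n)^2}$; and otherwise stays put. *)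

theory Defs
  imports "HOL-Analysis.Analysis"
begin

definition K_states :: "nat \<Rightarrow> (nat \<times> nat) set" where
  "K_states n = {(ka, kb). ka \<le> n \<and> kb \<le> n \<and> ka + kb \<ge> n}"

definition K_trans :: "real \<Rightarrow> nat \<Rightarrow> nat \<times> nat \<Rightarrow> nat \<times> nat \<Rightarrow> real" where
  "K_trans a n x y =
    (let ka = fst x; kb = snd x; b = 2 - a; N2 = (2 * real n)^2;
         p1 = 2*a*b*(real n - real kb)*(real ka + real kb + 1) / N2;
         p2 = 2*a^2*(real n - real ka)*(real ka + real kb + 1) / N2;
         p3 = 2*a*(b - a)*(real n - real ka)*real kb / N2
     in (if y = (ka, kb + 1) then p1 else 0)
      + (if y = (ka + 1, kb) then p2 else 0)
      + (if kb \<ge> 1 \<and> y = (ka + 1, kb - 1) then p3 else 0)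
      + (if y = x then 1 - p1 - p2 - p3 else 0))"

text \<open>Probability that the chain started at x has not hit (n,n) at any of the
  times 0,...,t, i.e. P_x(tau > t), via the Markov property.\<close>
primrec K_not_hit :: "real \<Rightarrow> nat \<Rightarrow> nat \<Rightarrow> nat \<times> nat \<Rightarrow> real" where
  "K_not_hit a n 0 x = (if x = (n, n) then 0 else 1)"
| "K_not_hit a n (Suc t) x =
     (if x = (n, n) then 0
      else (\<Sum>y\<in>K_states n. K_trans a n x y * K_not_hit a n t y))"

text \<open>Expected hitting time of (n,n): E_x tau = sum over t of P_x(tau > t).\<close>
definition K_hit_time_exp :: "real \<Rightarrow> nat \<Rightarrow> nat \<times> nat \<Rightarrow> ennreal" where
  "K_hit_time_exp a n x = (\<Sum>t. ennreal (K_not_hit a n t x))"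

end

theory Submission
  imports Defs
begin

text \<open>
  The potential \<open>\<phi>(ka, kb) = (n - kb) + w (n - ka)\<close> with a suitable weight \<open>w \<ge> 1\<close>
  vanishes only at \<open>(n, n)\<close> and, on the region \<open>ka + kb \<ge> 2 c\<^sub>1 n\<close>, which the chain
  never leaves, contracts in expectation by the factor \<open>q = 1 - a (2 c\<^sub>1 - 1) / n\<close> per
  step. Hence \<open>P(\<tau> > t) \<le> min 1 (q\<^sup>t \<phi>)\<close>; summing with the cutoff
  \<open>t \<approx> ln \<phi> / (1 - q)\<close> gives \<open>E \<tau> \<le> (ln \<phi> + 2) / (1 - q)\<close>, and \<open>\<phi> \<le> (1 + w) n\<close>.
\<close>

lemma suminf_le_capped_geometric:
  fixes f :: "nat \<Rightarrow> real" and q M :: real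
  assumes q: "0 \<le> q" "q < 1" and M: "1 \<le> M"
    and f: "\<And>t. 0 \<le> f t" "\<And>t. f t \<le> 1" "\<And>t. f t \<le> M * q^t"
  shows "summable f" and "suminf f \<le> (ln M + 2) / (1 - q)"
proof -
  have geom: "summable (\<lambda>t. C * q^t)" for C
    using q by (intro summable_mult summable_geometric) simp
  show sf: "summable f"
    by (rule summable_comparison_test'[OF geom, of 0]) (use f in auto)
  define s T where "s = 1 - q" and "T = nat \<lceil>ln M / s\<rceil>"
  have s: "0 < s" "s \<le> 1"
    using q by (simp_all add: s_def)
  have T: "ln M / s \<le> real T" "real T \<le> ln M / s + 1"
    using M s by (simp_all add: T_def)
  have "q^T \<le> exp (- s)^T"
    using q exp_ge_add_one_self[of "- s"] by (intro power_mono) (simp_all add: s_def)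
  also have "\<dots> = exp (- (s * real T))"
    by (simp add: exp_of_nat_mult[symmetric] mult_ac)
  also have "\<dots> \<le> exp (- ln M)"
    using T(1) s by (simp add: divide_le_eq mult_ac)
  also have "\<dots> = 1 / M"
    using M by (simp add: exp_minus inverse_eq_divide)
  finally have MqT: "M * q^T \<le> 1"
    using M by (simp add: field_simps)
  have "(\<Sum>t. f (t + T)) \<le> (\<Sum>t. (M * q^T) * q^t)"
    using f(3)[of "_ + T"] by (intro suminf_le summable_ignore_initial_segment sf geom) (simp add: power_add mult_ac)
  also have "\<dots> = M * q^T / s"
    using q by (simp add: suminf_mult suminf_geometric s_def)
  also have "\<dots> \<le> 1 / s"
    using MqT s by (simp add: divide_right_mono)
  finally have tail: "(\<Sum>t. f (t + T)) \<le> 1 / s" .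
  have head: "(\<Sum>t<T. f t) \<le> real T"
    using sum_bounded_above[of "{..<T}" f 1] f(2) by simp
  have "suminf f = (\<Sum>t. f (t + T)) + (\<Sum>t<T. f t)"
    using sf by (rule suminf_split_initial_segment)
  also have "\<dots> \<le> 1 / s + (ln M / s + 1 / s)"
  proof -
    have "1 \<le> 1 / s"
      using s by simp
    then show ?thesis
      using tail head T(2) by linarith
  qed
  also have "\<dots> = (ln M + 2) / s"
    by (simp add: add_divide_distrib)
  finally show "suminf f \<le> (ln M + 2) / (1 - q)"
    by (simp add: s_def)
qed

definition K_prob_b :: "real \<Rightarrow> nat \<Rightarrow> nat \<Rightarrow> nat \<Rightarrow> real" where
  "K_prob_b a n ka kb = 2*a*(2-a)*(real n - real kb)*(real ka + real kb + 1) / (2 * real n)^2"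

definition K_prob_a :: "real \<Rightarrow> nat \<Rightarrow> nat \<Rightarrow> nat \<Rightarrow> real" where
  "K_prob_a a n ka kb = 2*a^2*(real n - real ka)*(real ka + real kb + 1) / (2 * real n)^2"

definition K_prob_swap :: "real \<Rightarrow> nat \<Rightarrow> nat \<Rightarrow> nat \<Rightarrow> real" where
  "K_prob_swap a n ka kb = 2*a*((2-a)-a)*(real n - real ka)*real kb / (2 * real n)^2"

definition K_step :: "real \<Rightarrow> nat \<Rightarrow> (nat \<times> nat \<Rightarrow> real) \<Rightarrow> nat \<times> nat \<Rightarrow> real" where
  "K_step a n g x = (\<Sum>y\<in>K_states n. K_trans a n x y * g y)"

lemma finite_K_states: "finite (K_states n)"
  by (rule finite_subset[of _ "{0..n} \<times> {0..n}"]) (auto simp: K_states_def)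

lemma K_step_eq:
  fixes a :: real
  assumes x: "(ka, kb) \<in> K_states n"
  defines "p1 \<equiv> K_prob_b a n ka kb" and "p2 \<equiv> K_prob_a a n ka kb" and "p3 \<equiv> K_prob_swap a n ka kb"
  shows "K_step a n g (ka, kb) =
     p1 * g (ka, kb+1) + p2 * g (ka+1, kb) + p3 * g (ka+1, kb-1) + (1 - p1 - p2 - p3) * g (ka, kb)"
proof -
  let ?S = "K_states n"
  have sum_at: "(\<Sum>y\<in>?S. if y = z then p * g z else 0) = p * g z"
    if "z \<notin> ?S \<Longrightarrow> p = 0" for z p
    using that by (cases "z \<in> ?S") (simp_all add: sum.delta[OF finite_K_states])
  have p3_0: "kb = 0 \<Longrightarrow> p3 = 0" by (simp add: p3_def K_prob_swap_def)
  have pointwise: "K_trans a n (ka, kb) y * g y =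
      (if y = (ka, kb+1) then p1 * g (ka, kb+1) else 0)
    + (if y = (ka+1, kb) then p2 * g (ka+1, kb) else 0)
    + (if kb \<ge> 1 \<and> y = (ka+1, kb-1) then p3 * g (ka+1, kb-1) else 0)
    + (if y = (ka, kb) then (1 - p1 - p2 - p3) * g (ka, kb) else 0)" for y
    unfolding K_trans_def Let_def p1_def p2_def p3_def K_prob_b_def K_prob_a_def K_prob_swap_def
    by (auto simp: algebra_simps)
  have sum3: "(\<Sum>y\<in>?S. if kb \<ge> 1 \<and> y = (ka+1, kb-1) then p3 * g (ka+1, kb-1) else 0)
      = p3 * g (ka+1, kb-1)"
  proof (cases "kb \<ge> 1")
    case True
    then have "(\<Sum>y\<in>?S. if kb \<ge> 1 \<and> y = (ka+1, kb-1) then p3 * g (ka+1, kb-1) else 0)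
        = (\<Sum>y\<in>?S. if y = (ka+1, kb-1) then p3 * g (ka+1, kb-1) else 0)"
      by simp
    also have "\<dots> = p3 * g (ka+1, kb-1)"
      using True x by (intro sum_at) (auto simp: K_states_def p3_def K_prob_swap_def)
    finally show ?thesis .
  qed (use p3_0 in simp)
  have sum1: "(\<Sum>y\<in>?S. if y = (ka, kb+1) then p1 * g (ka, kb+1) else 0) = p1 * g (ka, kb+1)"
    using x by (intro sum_at) (auto simp: K_states_def p1_def K_prob_b_def)
  have sum2: "(\<Sum>y\<in>?S. if y = (ka+1, kb) then p2 * g (ka+1, kb) else 0) = p2 * g (ka+1, kb)"
    using x by (intro sum_at) (auto simp: K_states_def p2_def K_prob_a_def)
  have sum4: "(\<Sum>y\<in>?S. if y = (ka, kb) then (1 - p1 - p2 - p3) * g (ka, kb) else 0)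
      = (1 - p1 - p2 - p3) * g (ka, kb)"
    using x by (intro sum_at) simp
  show ?thesis
    unfolding K_step_def pointwise sum.distrib sum1 sum2 sum3 sum4 ..
qed

lemma K_step_const: "x \<in> K_states n \<Longrightarrow> K_step a n (\<lambda>_. c) x = c"
  by (cases x) (simp add: K_step_eq algebra_simps)

lemma K_step_scale: "K_step a n (\<lambda>y. c * g y) x = c * K_step a n g x"
  by (simp add: K_step_def sum_distrib_left mult_ac)

lemma K_prob_nonneg:
  fixes a :: real
  assumes "0 < a" "a \<le> 1" "ka \<le> n" "kb \<le> n"
  shows "0 \<le> K_prob_b a n ka kb" "0 \<le> K_prob_a a n ka kb" "0 \<le> K_prob_swap a n ka kb"
  using assms by (simp_all add: K_prob_b_def K_prob_a_def K_prob_swap_def)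

lemma K_prob_numerator_le:
  fixes a A B N :: real
  assumes a: "0 < a" "a \<le> 1" and AB: "0 \<le> A" "A \<le> N" "0 \<le> B" "B \<le> N" "N + 1 \<le> A + B"
  shows "2*a*(2-a)*(N-B)*(A+B+1) + 2*a^2*(N-A)*(A+B+1) + 2*a*((2-a)-a)*(N-A)*B \<le> (2*N)^2"
proof -
  define M where "M = 2*N - (A + B)"
  have "a*(2-a) = 1 - (1-a)^2" "2*a*((2-a)-a) = 1 - (2*a-1)^2"
    by (simp_all add: algebra_simps power2_eq_square)
  then have coeff: "a*(2-a) \<le> 1" "a^2 \<le> 1" "2*a*((2-a)-a) \<le> 1"
    using a by (simp_all add: power_le_one)
  have "2*a*(2-a)*(N-B)*(A+B+1) + 2*a^2*(N-A)*(A+B+1) + 2*a*((2-a)-a)*(N-A)*B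
    = (a*(2-a)) * (2*(N-B)*(A+B+1)) + a^2 * (2*(N-A)*(A+B+1)) + (2*a*((2-a)-a)) * ((N-A)*B)"
    by (simp add: algebra_simps)
  also have "\<dots> \<le> 2*(N-B)*(A+B+1) + 2*(N-A)*(A+B+1) + (N-A)*B"
    using a coeff AB by (intro add_mono mult_left_le_one_le) auto
  also have "\<dots> \<le> 2*M*(A+B+1) + M*N"
  proof -
    have "(N-A)*B \<le> (N-A)*N" "(N-A)*N \<le> M*N"
      using AB by (auto simp: M_def intro: mult_left_mono mult_right_mono)
    then show ?thesis by (simp add: M_def algebra_simps)
  qed
  also have "\<dots> = (2*N)^2 - (M^2 + M*(3*(N-M) - 2) + 4*(N-M)^2)"
    by (simp add: M_def algebra_simps power2_eq_square)
  also have "\<dots> \<le> (2*N)^2"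
  proof -
    have "0 \<le> M" "1 \<le> N - M"
      using AB by (simp_all add: M_def)
    then have "0 \<le> M^2 + M*(3*(N-M) - 2) + 4*(N-M)^2"
      by (intro add_nonneg_nonneg mult_nonneg_nonneg) auto
    then show ?thesis
      by linarith
  qed
  finally show ?thesis .
qed

lemma K_prob_sum_le_1:
  fixes a :: real
  assumes a: "0 < a" "a \<le> 1" and k: "ka \<le> n" "kb \<le> n" "n < ka + kb"
  shows "K_prob_b a n ka kb + K_prob_a a n ka kb + K_prob_swap a n ka kb \<le> 1"
proof -
  define A B N where "A = real ka" and "B = real kb" and "N = real n"
  have AB: "0 \<le> A" "A \<le> N" "0 \<le> B" "B \<le> N" "N + 1 \<le> A + B"
    using k by (auto simp: A_def B_def N_def)
  have pos: "0 < (2*N)^2"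
    using AB by simp
  have "K_prob_b a n ka kb + K_prob_a a n ka kb + K_prob_swap a n ka kb
      = (2*a*(2-a)*(N-B)*(A+B+1) + 2*a^2*(N-A)*(A+B+1) + 2*a*((2-a)-a)*(N-A)*B) / (2*N)^2"
    by (simp add: K_prob_b_def K_prob_a_def K_prob_swap_def A_def B_def N_def add_divide_distrib)
  also have "\<dots> \<le> 1"
    by (subst divide_le_eq_1_pos[OF pos]) (rule K_prob_numerator_le[OF a AB])
  finally show ?thesis .
qed

lemma K_trans_nonneg:
  fixes a :: real
  assumes "0 < a" "a \<le> 1" "x \<in> K_states n" "n < fst x + snd x"
  shows "0 \<le> K_trans a n x y"
proof -
  obtain ka kb where x: "x = (ka, kb)"
    by (cases x)
  with assms have "ka \<le> n" "kb \<le> n" "n < ka + kb"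
    by (auto simp: K_states_def)
  with assms(1,2) show ?thesis
    using K_prob_nonneg[of a ka n kb] K_prob_sum_le_1[of a ka n kb]
    by (auto simp: x K_trans_def Let_def K_prob_b_def K_prob_a_def K_prob_swap_def)
qed

lemma K_trans_support: "K_trans a n x y \<noteq> 0 \<Longrightarrow> fst x + snd x \<le> fst y + snd y"
  by (auto simp: K_trans_def Let_def split: if_splits)

definition K_states_above :: "real \<Rightarrow> nat \<Rightarrow> (nat \<times> nat) set" where
  "K_states_above c n = {x \<in> K_states n. 2 * c * real n \<le> real (fst x) + real (snd x)}"

lemma K_states_aboveD:
  assumes "1/2 < c" "1 \<le> n" "(ka, kb) \<in> K_states_above c n"
  shows "ka \<le> n" "kb \<le> n" "n < ka + kb" "(2*c - 1) * real n \<le> real kb"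
proof -
  show ka: "ka \<le> n" and "kb \<le> n"
    using assms(3) by (auto simp: K_states_above_def K_states_def)
  have "0 < (2*c - 1) * real n"
    using assms(1,2) by simp
  moreover have "2 * c * real n \<le> real ka + real kb"
    using assms(3) by (simp add: K_states_above_def)
  ultimately show "n < ka + kb" "(2*c - 1) * real n \<le> real kb"
    using ka by (simp_all add: algebra_simps of_nat_less_iff[symmetric])
qed

text \<open>No move decreases \<open>ka + kb\<close>, so the chain stays in \<open>K_states_above c n\<close>, where all
  transition weights are nonnegative.\<close>

lemma K_step_mono:
  fixes a c :: real
  assumes "0 < a" "a \<le> 1" "1/2 < c" "1 \<le> n" "x \<in> K_states_above c n"
    and le: "\<And>y. y \<in> K_states_above c n \<Longrightarrow> g y \<le> h y"
  shows "K_step a n g x \<le> K_step a n h x"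
  unfolding K_step_def
proof (rule sum_mono)
  fix y assume y: "y \<in> K_states n"
  show "K_trans a n x y * g y \<le> K_trans a n x y * h y"
  proof (cases "K_trans a n x y = 0")
    case False
    have "n < fst x + snd x"
      using K_states_aboveD(3)[of c n "fst x" "snd x"] assms by simp
    with assms have "0 \<le> K_trans a n x y"
      by (intro K_trans_nonneg) (auto simp: K_states_above_def)
    moreover have "y \<in> K_states_above c n"
      using K_trans_support[OF False] y \<open>x \<in> K_states_above c n\<close>
      by (auto simp: K_states_above_def simp flip: of_nat_add)
    ultimately show ?thesis
      by (simp add: le mult_left_mono)
  qed simp
qed

lemma K_prob_b_ge:
  fixes a c :: real
  assumes a: "0 < a" "a \<le> 1" and "c \<le> 1" "1 \<le> n" "kb \<le> n"
    and upper: "2 * c * real n \<le> real ka + real kb"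
  shows "a*(2*c - 1) / real n * (real n - real kb) \<le> K_prob_b a n ka kb"
proof -
  define N S where "N = real n" and "S = real ka + real kb + 1"
  have "4*N*(a*(2*c - 1)) = 2*a*(2*c*N) - 4*a*N*(1 - c)"
    by (simp add: algebra_simps)
  also have "\<dots> \<le> 2*a*(2*c*N)"
    using assms by (simp add: N_def)
  also have "\<dots> \<le> 2*a*S"
    using a upper by (intro mult_left_mono) (auto simp: N_def S_def)
  also have "\<dots> = 2*a*(2-a)*S - 2*a*(1-a)*S"
    by (simp add: algebra_simps)
  also have "\<dots> \<le> 2*a*(2-a)*S"
    using a by (simp add: S_def)
  finally have key: "(N - real kb) * (4*N*(a*(2*c - 1))) \<le> (N - real kb) * (2*a*(2-a)*S)"
    using assms by (intro mult_left_mono) (auto simp: N_def)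
  have "a*(2*c - 1) / N * (N - real kb) = (N - real kb) * (4*N*(a*(2*c - 1))) / (2*N)^2"
    using assms by (simp add: N_def power2_eq_square)
  also have "\<dots> \<le> (N - real kb) * (2*a*(2-a)*S) / (2*N)^2"
    using key by (rule divide_right_mono) simp
  also have "\<dots> = K_prob_b a n ka kb"
    by (simp add: K_prob_b_def N_def S_def mult_ac)
  finally show ?thesis
    by (simp add: N_def)
qed

lemma K_prob_a_swap_ge:
  fixes a c w :: real
  assumes a: "0 < a" "a \<le> 1" and w: "1 \<le> w" "(1-a)*(2*c - 1) \<le> w*(a*(1-c))"
    and "1 \<le> n" "ka \<le> n" and kb: "(2*c - 1) * real n \<le> real kb"
    and upper: "2 * c * real n \<le> real ka + real kb"
  shows "a*(2*c - 1) / real n * (w * (real n - real ka))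
    \<le> w * K_prob_a a n ka kb + (w - 1) * K_prob_swap a n ka kb"
proof -
  define N S where "N = real n" and "S = real ka + real kb + 1"
  have "4*N*(a*(2*c - 1))*w
      = 2*a^2*w*(2*c*N) + 2*a*((2-a)-a)*(w-1)*((2*c - 1)*N) - 4*a*N*(w*(a*(1-c)) - (1-a)*(2*c - 1))"
    by (simp add: algebra_simps power2_eq_square)
  also have "\<dots> \<le> 2*a^2*w*(2*c*N) + 2*a*((2-a)-a)*(w-1)*((2*c - 1)*N)"
    using a w by (simp add: N_def)
  also have "\<dots> \<le> 2*a^2*w*S + 2*a*((2-a)-a)*(w-1)*real kb"
    using a w kb upper by (intro add_mono mult_left_mono) (auto simp: N_def S_def)
  finally have key: "(N - real ka) * (4*N*(a*(2*c - 1))*w)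
      \<le> (N - real ka) * (2*a^2*w*S + 2*a*((2-a)-a)*(w-1)*real kb)"
    using assms by (intro mult_left_mono) (auto simp: N_def)
  have "a*(2*c - 1) / N * (w * (N - real ka)) = (N - real ka) * (4*N*(a*(2*c - 1))*w) / (2*N)^2"
    using assms by (simp add: N_def power2_eq_square)
  also have "\<dots> \<le> (N - real ka) * (2*a^2*w*S + 2*a*((2-a)-a)*(w-1)*real kb) / (2*N)^2"
    using key by (rule divide_right_mono) simp
  also have "\<dots> = (w * (2*a^2*(N - real ka)*S) + (w - 1) * (2*a*((2-a)-a)*(N - real ka)*real kb)) / (2*N)^2"
    by (simp add: algebra_simps)
  also have "\<dots> = w * K_prob_a a n ka kb + (w - 1) * K_prob_swap a n ka kb"
    by (simp add: K_prob_a_def K_prob_swap_def N_def S_def add_divide_distrib)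
  finally show ?thesis
    by (simp add: N_def)
qed

text \<open>The swap move increases the b-deficit \<open>n - kb\<close>; weighting the a-deficit by \<open>w \<ge> 1\<close>
  makes it decrease the potential nonetheless.\<close>

definition K_potential :: "real \<Rightarrow> nat \<Rightarrow> nat \<times> nat \<Rightarrow> real" where
  "K_potential w n x = (real n - real (snd x)) + w * (real n - real (fst x))"

lemma K_potential_nonneg: "0 \<le> w \<Longrightarrow> x \<in> K_states n \<Longrightarrow> 0 \<le> K_potential w n x"
  by (auto simp: K_potential_def K_states_def)

lemma K_potential_ge_1:
  assumes "1 \<le> w" "x \<in> K_states n" "x \<noteq> (n, n)"
  shows "1 \<le> K_potential w n x"
proof -
  define u v where "u = real n - real (snd x)" and "v = real n - real (fst x)"
  have "0 \<le> u" "0 \<le> v"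
    using assms(2) by (auto simp: K_states_def u_def v_def)
  moreover have "0 \<le> w * v"
    using \<open>0 \<le> v\<close> assms(1) by simp
  moreover have "1 \<le> v \<Longrightarrow> 1 \<le> w * v"
    using assms(1) mult_mono[of 1 w 1 v] by simp
  moreover have "1 \<le> u \<or> 1 \<le> v"
    using assms(2,3) by (cases x) (auto simp: K_states_def u_def v_def)
  ultimately have "1 \<le> u + w * v"
    by linarith
  then show ?thesis
    by (simp add: K_potential_def u_def v_def)
qed

lemma K_potential_le: "0 \<le> w \<Longrightarrow> x \<in> K_states n \<Longrightarrow> K_potential w n x \<le> (1 + w) * real n"
  by (auto simp: K_potential_def K_states_def algebra_simps)

lemma K_potential_drift:
  fixes a c w :: real
  assumes a: "0 < a" "a \<le> 1" and c: "1/2 < c" "c \<le> 1"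
    and w: "1 \<le> w" "(1-a)*(2*c - 1) \<le> w*(a*(1-c))"
    and n: "1 \<le> n" and x: "x \<in> K_states_above c n"
  shows "K_step a n (K_potential w n) x \<le> (1 - a*(2*c - 1) / real n) * K_potential w n x"
proof -
  obtain ka kb where x_eq: "x = (ka, kb)"
    by (cases x)
  note k = K_states_aboveD[OF c(1) n x[unfolded x_eq]]
  have states: "(ka, kb) \<in> K_states n" and upper: "2 * c * real n \<le> real ka + real kb"
    using x by (simp_all add: x_eq K_states_above_def)
  have "0 < (2*c - 1) * real n"
    using c n by simp
  with k have "1 \<le> kb"
    by linarith
  define r where "r = a*(2*c - 1) / real n"
  have "K_step a n (K_potential w n) x = K_potential w n x
      - (K_prob_b a n ka kb + (w * K_prob_a a n ka kb + (w - 1) * K_prob_swap a n ka kb))"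
    using k \<open>1 \<le> kb\<close>
    by (simp add: x_eq K_step_eq[OF states] K_potential_def of_nat_diff algebra_simps)
  also have "\<dots> \<le> K_potential w n x - (r * (real n - real kb) + r * (w * (real n - real ka)))"
    using K_prob_b_ge[OF a c(2) n k(2) upper] K_prob_a_swap_ge[OF a w n k(1) k(4) upper]
    unfolding r_def by linarith
  also have "\<dots> = (1 - r) * K_potential w n x"
    by (simp add: x_eq K_potential_def algebra_simps)
  finally show ?thesis
    unfolding r_def .
qed

definition K_weight :: "real \<Rightarrow> real \<Rightarrow> real" where
  "K_weight a c = 1 + (1-a)*(2*c - 1) / (a*(1-c))"

lemma K_weight:
  fixes a c :: real
  assumes "0 < a" "a \<le> 1" "1/2 < c" "c < 1"
  shows "1 \<le> K_weight a c" "(1-a)*(2*c - 1) \<le> K_weight a c * (a*(1-c))"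
proof -
  define D where "D = a*(1-c)"
  have "0 < D"
    using assms by (simp add: D_def)
  then have "K_weight a c * D = D + (1-a)*(2*c - 1)"
    unfolding K_weight_def D_def[symmetric] by (simp add: distrib_right)
  with \<open>0 < D\<close> show "(1-a)*(2*c - 1) \<le> K_weight a c * (a*(1-c))"
    by (simp add: D_def)
  show "1 \<le> K_weight a c"
    using assms by (simp add: K_weight_def)
qed

lemma K_not_hit_Suc: "K_not_hit a n (Suc t) x = (if x = (n, n) then 0 else K_step a n (K_not_hit a n t) x)"
  by (simp add: K_step_def)

lemma K_not_hit_bounded:
  fixes a c :: real
  assumes "0 < a" "a \<le> 1" "1/2 < c" "1 \<le> n" "x \<in> K_states_above c n"
  shows "0 \<le> K_not_hit a n t x \<and> K_not_hit a n t x \<le> 1"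
  using assms(5)
proof (induction t arbitrary: x)
  case (Suc t)
  have "K_step a n (\<lambda>_. 0) x \<le> K_step a n (K_not_hit a n t) x"
    "K_step a n (K_not_hit a n t) x \<le> K_step a n (\<lambda>_. 1) x"
    using Suc assms by (auto intro!: K_step_mono)
  then show ?case
    using Suc.prems by (simp add: K_not_hit_Suc K_step_const K_states_above_def del: K_not_hit.simps(2))
qed simp

lemma K_not_hit_le_potential:
  fixes a c w :: real
  assumes a: "0 < a" "a \<le> 1" and c: "1/2 < c" "c \<le> 1"
    and w: "1 \<le> w" "(1-a)*(2*c - 1) \<le> w*(a*(1-c))"
    and n: "1 \<le> n"
  defines "q \<equiv> 1 - a*(2*c - 1) / real n"
  shows "x \<in> K_states_above c n \<Longrightarrow> K_not_hit a n t x \<le> q^t * K_potential w n x"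
proof (induction t arbitrary: x)
  case 0
  then show ?case
    using w(1) K_potential_ge_1[of w x n] K_potential_nonneg[of w x n] by (auto simp: K_states_above_def)
next
  case (Suc t)
  have "0 \<le> q"
  proof -
    have "a*(2*c - 1) \<le> 1"
      using a c by (intro mult_le_one) auto
    with n show ?thesis
      by (simp add: q_def field_simps)
  qed
  have "K_step a n (K_not_hit a n t) x \<le> K_step a n (\<lambda>y. q^t * K_potential w n y) x"
    using Suc a c n by (intro K_step_mono) auto
  also have "\<dots> \<le> q^t * (q * K_potential w n x)"
    unfolding K_step_scale q_def
    using K_potential_drift[OF a c w n Suc.prems] \<open>0 \<le> q\<close>
    by (intro mult_left_mono) (auto simp: q_def)
  also have "\<dots> = q^Suc t * K_potential w n x"
    by simp
  finally show ?case
    using Suc.prems \<open>0 \<le> q\<close> w(1) K_potential_nonneg[of w x n]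
    by (auto simp: K_not_hit_Suc K_states_above_def simp del: K_not_hit.simps(2))
qed

lemma K_hit_time_exp_le_potential:
  fixes a c w :: real
  assumes a: "0 < a" "a \<le> 1" and c: "1/2 < c" "c \<le> 1"
    and w: "1 \<le> w" "(1-a)*(2*c - 1) \<le> w*(a*(1-c))"
    and n: "1 \<le> n" and x: "x \<in> K_states_above c n"
  shows "K_hit_time_exp a n x
    \<le> ennreal (real n / (a*(2*c - 1)) * (ln (max 1 (K_potential w n x)) + 2))"
proof -
  define r q where "r = a*(2*c - 1)" and "q = 1 - r / real n"
  have "0 < r" "r \<le> 1"
    using a c unfolding r_def by (auto intro: mult_le_one)
  with n have q: "0 \<le> q" "q < 1" "1 - q = r / real n"
    by (simp_all add: q_def field_simps)
  let ?f = "\<lambda>t. K_not_hit a n t x"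
  have f_bounded: "0 \<le> ?f t" "?f t \<le> 1" for t
    using K_not_hit_bounded[OF a c(1) n x] by auto
  have f_le_geometric: "?f t \<le> max 1 (K_potential w n x) * q^t" for t
  proof -
    have "?f t \<le> q^t * K_potential w n x"
      using K_not_hit_le_potential[OF a c w n x] by (simp add: q_def r_def)
    also have "\<dots> \<le> q^t * max 1 (K_potential w n x)"
      using q by (intro mult_left_mono) auto
    finally show ?thesis
      by (simp add: mult.commute)
  qed
  note capped = suminf_le_capped_geometric[OF q(1,2) max.cobounded1 f_bounded f_le_geometric]
  have "K_hit_time_exp a n x = ennreal (suminf ?f)"
    unfolding K_hit_time_exp_def using f_bounded capped(1) by (intro suminf_ennreal2) auto
  then show ?thesis
    using capped(2) q(3) by (simp add: r_def ennreal_leI mult.commute)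
qed

lemma ln_ln_double_ge: "1 \<le> x \<Longrightarrow> -1 \<le> ln (ln (2 * x :: real))"
proof -
  assume "1 \<le> x"
  have "1/2 \<le> ln (2::real)"
    using ln_le_minus_one[of "1/2::real"] by (simp add: ln_div)
  also have "\<dots> \<le> ln (2 * x)"
    using \<open>1 \<le> x\<close> by simp
  finally have "- ln 2 \<le> ln (ln (2 * x))"
    using ln_le_cancel_iff[of "1/2" "ln (2 * x)"] by (simp add: ln_div)
  then show ?thesis
    using ln_2_less_1 by linarith
qed

lemma ln_max_K_potential_le:
  assumes w: "1 \<le> w" and n: "1 \<le> n" and x: "x \<in> K_states n"
  shows "ln (max 1 (K_potential w n x)) \<le> ln (1 + w) + ln (2 * real n)"
proof -
  have "1 \<le> (1 + w) * real n" "(1 + w) * real n \<le> (1 + w) * (2 * real n)"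
    using w n mult_mono[of 1 "1 + w" 1 "real n"] by simp_all
  then have "ln (max 1 (K_potential w n x)) \<le> ln ((1 + w) * (2 * real n))"
    using K_potential_le[of w x n] x w by (intro ln_mono) auto
  also have "\<dots> = ln (1 + w) + ln (2 * real n)"
    using w n by (simp add: ln_mult)
  finally show ?thesis .
qed

theorem mainTheorem5:
  fixes a c1 :: real
  assumes "0 < a" "a \<le> 1" "1/2 < c1" "c1 < 1"
  shows "\<exists>C::real. \<forall>n::nat. \<forall>ka kb. n \<ge> 1 \<longrightarrow> (ka, kb) \<in> K_states n
           \<longrightarrow> real ka + real kb \<ge> 2 * c1 * real n
           \<longrightarrow> K_hit_time_exp a n (ka, kb)
               \<le> ennreal (real n / (a * (2 * c1 - 1))
                     * (ln (2 * real n) + ln (ln (2 * real n)) + C))"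
proof (intro exI allI impI)
  define w where "w = K_weight a c1"
  have w: "1 \<le> w" "(1-a)*(2*c1 - 1) \<le> w*(a*(1-c1))"
    using K_weight[OF assms] by (simp_all add: w_def)
  fix n ka kb :: nat
  assume n: "n \<ge> 1" and states: "(ka, kb) \<in> K_states n"
    and "real ka + real kb \<ge> 2 * c1 * real n"
  then have x: "(ka, kb) \<in> K_states_above c1 n"
    by (simp add: K_states_above_def)
  have "ln (max 1 (K_potential w n (ka, kb))) + 2
      \<le> ln (2 * real n) + ln (ln (2 * real n)) + (ln (1 + w) + 3)"
    using ln_max_K_potential_le[OF w(1) n states] ln_ln_double_ge[of "real n"] n by simp
  then have "real n / (a*(2*c1 - 1)) * (ln (max 1 (K_potential w n (ka, kb))) + 2)
      \<le> real n / (a*(2*c1 - 1)) * (ln (2 * real n) + ln (ln (2 * real n)) + (ln (1 + w) + 3))"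
    using assms by (intro mult_left_mono) auto
  with K_hit_time_exp_le_potential[OF assms(1-3) less_imp_le[OF assms(4)] w n x]
  show "K_hit_time_exp a n (ka, kb) \<le> ennreal (real n / (a * (2 * c1 - 1))
      * (ln (2 * real n) + ln (ln (2 * real n)) + (ln (1 + w) + 3)))"
    by (simp add: ennreal_leI order_trans)
qed

end
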